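(* A function $f:\mathbb{N}\to\mathbb{N}$ is obliviously-computable if and only if $f$ is semilinear and nondecreasing.
   Context: A chemical reaction network (CRN) is a pair $(\mathcal{S},\mathcal{R})$ of a finite set of species and a finite set of reactions $(\vec{R},\vec{P})\in\mathbb{N}^{\mathcal{S}}\times\mathbb{N}^{\mathcal{S}}$. A configuration is $\vec{C}\in\mathbb{N}^{\mathcal{S}}$; a reaction is applicable if $\vec{R}\le\vec{C}$ and yields $\vec{C}-\vec{R}+\vec{P}$; reachability is via finite sequences of applicable reactions. To compute $f:\mathbb{N}\to\mathbb{N}$ the CRN has an input species $X$, output species $Y$, leader species $L$; the initial configuration for input $x$ has $x$ copies of $X$, one $L$, nothing else. $\vec{C}$ is stable if all configurations reachable from it have the same count of $Y$. The CRN stably computes $f$ if for every input $x$ and every $\vec{C}$ reachable from the initial configuration, some stable $\vec{O}$ reachable from $\vec{C}$ has $\vec{O}(Y)=f(x)$. The CRN is output-oblivious if $Y$ is never a reactant ($\vec{R}(Y)=0$ for all reactions). $f$ is obliviously-computable if stably computed by an output-oblivious CRN. A set $S\subseteq\mathbb{N}^d$ is semilinear if it is a finite Boolean combination of threshold sets $\{\vec{x}:\vec{a}\cdot\vec{x}\ge b\}$ ($\vec{a}\in\mathbb{Z}^d,b\in\mathbb{Z}$) and mod sets $\{\vec{x}:\vec{a}\cdot\vec{x}\equiv b\bmod c\}$ ($c\in\mathbb{N}_+$). A function is semilinear if it is a finite union of affine partial functions whose domains are disjoint semilinear sets. *)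

theory Defs
  imports Complex_Main
begin

text \<open>Species are represented by natural numbers; a CRN uses a finite set S of them.
  Configurations are functions nat \<Rightarrow> nat (counts), reactions are pairs (R, P) of
  reactant and product vectors supported in S.\<close>

type_synonym config = "nat \<Rightarrow> nat"
type_synonym reaction = "config \<times> config"

definition valid_crn :: "nat set \<Rightarrow> reaction set \<Rightarrow> nat \<Rightarrow> nat \<Rightarrow> nat \<Rightarrow> bool" where
  "valid_crn S R X Y L \<longleftrightarrow>
     finite S \<and> finite R \<and> X \<in> S \<and> Y \<in> S \<and> L \<in> S \<and>
     X \<noteq> Y \<and> X \<noteq> L \<and> Y \<noteq> L \<and>
     (\<forall>(r, p) \<in> R. \<forall>s. s \<notin> S \<longrightarrow> r s = 0 \<and> p s = 0)"

definition applicable :: "reaction \<Rightarrow> config \<Rightarrow> bool" where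
  "applicable rp C \<longleftrightarrow> (\<forall>s. fst rp s \<le> C s)"

definition apply_reaction :: "reaction \<Rightarrow> config \<Rightarrow> config" where
  "apply_reaction rp C = (\<lambda>s. C s - fst rp s + snd rp s)"

definition step_rel :: "reaction set \<Rightarrow> (config \<times> config) set" where
  "step_rel R = {(C, apply_reaction rp C) | C rp. rp \<in> R \<and> applicable rp C}"

definition reachable :: "reaction set \<Rightarrow> config \<Rightarrow> config \<Rightarrow> bool" where
  "reachable R C D \<longleftrightarrow> (C, D) \<in> (step_rel R)\<^sup>*"

definition init_config :: "nat \<Rightarrow> nat \<Rightarrow> nat \<Rightarrow> config" where
  "init_config X L x = (\<lambda>s. if s = X then x else if s = L then 1 else 0)"

definition stable :: "reaction set \<Rightarrow> nat \<Rightarrow> config \<Rightarrow> bool" where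
  "stable R Y C \<longleftrightarrow> (\<forall>D. reachable R C D \<longrightarrow> D Y = C Y)"

definition stably_computes ::
  "reaction set \<Rightarrow> nat \<Rightarrow> nat \<Rightarrow> nat \<Rightarrow> (nat \<Rightarrow> nat) \<Rightarrow> bool" where
  "stably_computes R X Y L f \<longleftrightarrow>
     (\<forall>x C. reachable R (init_config X L x) C \<longrightarrow>
        (\<exists>Out. reachable R C Out \<and> stable R Y Out \<and> Out Y = f x))"

definition output_oblivious :: "reaction set \<Rightarrow> nat \<Rightarrow> bool" where
  "output_oblivious R Y \<longleftrightarrow> (\<forall>rp \<in> R. fst rp Y = 0)"

definition obliviously_computable :: "(nat \<Rightarrow> nat) \<Rightarrow> bool" where
  "obliviously_computable f \<longleftrightarrow>
     (\<exists>S R X Y L. valid_crn S R X Y L \<and> output_oblivious R Y \<and> stably_computes R X Y L f)"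

inductive semilinear_set :: "nat set \<Rightarrow> bool" where
  threshold: "semilinear_set {x. a * int x \<ge> b}"
| modset: "c > 0 \<Longrightarrow> semilinear_set {x. a * int x mod int c = b mod int c}"
| compl: "semilinear_set A \<Longrightarrow> semilinear_set (- A)"
| union: "semilinear_set A \<Longrightarrow> semilinear_set B \<Longrightarrow> semilinear_set (A \<union> B)"
| inter: "semilinear_set A \<Longrightarrow> semilinear_set B \<Longrightarrow> semilinear_set (A \<inter> B)"

text \<open>A function is semilinear if it is a finite union of affine partial functions
  x \<mapsto> a x + b (a, b rational) whose domains are pairwise disjoint semilinear sets
  (covering the whole domain of the total function f).\<close>

definition semilinear_fun :: "(nat \<Rightarrow> nat) \<Rightarrow> bool" where
  "semilinear_fun f \<longleftrightarrow>
     (\<exists>pieces :: (rat \<times> rat \<times> nat set) list.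
        (\<forall>i < length pieces. semilinear_set (snd (snd (pieces ! i)))) \<and>
        (\<forall>i < length pieces. \<forall>j < length pieces. i \<noteq> j \<longrightarrow>
            snd (snd (pieces ! i)) \<inter> snd (snd (pieces ! j)) = {}) \<and>
        (\<forall>x. \<exists>i < length pieces. x \<in> snd (snd (pieces ! i))) \<and>
        (\<forall>i < length pieces. \<forall>x \<in> snd (snd (pieces ! i)).
            of_nat (f x) = fst (pieces ! i) * of_nat x + fst (snd (pieces ! i))))"

end

theory Submission
  imports Defs "HOL-Library.Function_Algebras"
begin

text \<open>An output-oblivious CRN can only increase its output, so the function it computes is
  nondecreasing, and stable output configurations for consecutive inputs can be chained by adding
  one input molecule at a time.  By Dickson's lemma two of them, for inputs \<open>i < j\<close>, are
  comparable, and their difference can be added arbitrarily often while staying below a stable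
  configuration.  This forces \<open>f (i + n (j - i)) = f i + n (f j - f i)\<close> and
  \<open>f x + (f j - f i) \<le> f (x + (j - i))\<close> for \<open>x \<ge> i\<close>, which squeeze \<open>f\<close> into being eventually
  quasilinear: \<open>f (x + P) = f x + c\<close> for large \<open>x\<close>.  Conversely, such an \<open>f\<close> is computed by a
  counter that consumes the input one molecule at a time, counting modulo \<open>P\<close> beyond the
  threshold.  Finally, for nondecreasing \<open>f\<close> semilinearity is the same as eventual
  quasilinearity: the pieces of a semilinear function have eventually periodic domains, so the
  increments \<open>f (x + P) - f x\<close> are eventually periodic, and monotonicity makes them constant.\<close>

section \<open>Monotone sequences and Dickson's lemma\<close>

lemma mono_bounded_nat_seq_eventually_const:
  fixes u :: "nat \<Rightarrow> nat"
  assumes "mono u" and "\<And>k. u k \<le> B"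
  shows "\<exists>c. \<forall>\<^sub>F k in sequentially. u k = c"
proof -
  have "range u \<subseteq> {..B}"
    using assms(2) by auto
  then have fin: "finite (range u)"
    by (rule finite_subset) simp
  have "Max (range u) \<in> range u"
    using fin by (intro Max_in) auto
  then obtain K where K: "u K = Max (range u)"
    by (metis imageE)
  have "u k = u K" if "K \<le> k" for k
    using monoD[OF assms(1) that] Max_ge[OF fin, of "u k"] K by simp
  then show ?thesis
    unfolding eventually_sequentially by blast
qed

lemma antimono_nat_seq_eventually_const:
  fixes u :: "nat \<Rightarrow> nat"
  assumes "antimono u"
  shows "\<exists>K. \<forall>k\<ge>K. u k = u K"
proof -
  have "range u \<subseteq> {..u 0}"
    using antimonoD[OF assms] by auto
  then have fin: "finite (range u)"
    by (rule finite_subset) simp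
  have "Min (range u) \<in> range u"
    using fin by (intro Min_in) auto
  then obtain K where K: "u K = Min (range u)"
    by (metis imageE)
  have "u k = u K" if "K \<le> k" for k
    using antimonoD[OF assms that] Min_le[OF fin, of "u k"] K by simp
  then show ?thesis by blast
qed

lemma mono_nat_seq_eventually_const_or_filterlim_at_top:
  fixes u :: "nat \<Rightarrow> nat"
  assumes "mono u"
  shows "(\<exists>c. \<forall>\<^sub>F k in sequentially. u k = c) \<or> filterlim u at_top sequentially"
proof (cases "\<exists>B. \<forall>k. u k \<le> B")
  case True
  then show ?thesis using mono_bounded_nat_seq_eventually_const[OF assms] by blast
next
  case False
  have "\<forall>\<^sub>F k in sequentially. M \<le> u k" for M
  proof -
    obtain K where "M < u K" using False by (meson not_le)
    then have "\<forall>k\<ge>K. M \<le> u k" using monoD[OF assms] by (meson le_trans less_imp_le)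
    then show ?thesis unfolding eventually_sequentially by blast
  qed
  then show ?thesis by (simp add: filterlim_at_top)
qed

lemma mono_subseq_nat:
  fixes u :: "nat \<Rightarrow> nat"
  shows "\<exists>g :: nat \<Rightarrow> nat. strict_mono g \<and> mono (u \<circ> g)"
proof -
  obtain g :: "nat \<Rightarrow> nat" where g: "strict_mono g" "monoseq (\<lambda>k. u (g k))"
    using seq_monosub by blast
  show ?thesis
  proof (cases "mono (u \<circ> g)")
    case True
    then show ?thesis using g(1) by blast
  next
    case False
    then have "antimono (u \<circ> g)"
      using g(2) unfolding monoseq_def mono_def antimono_def by auto
    then obtain K where K: "\<forall>k\<ge>K. u (g k) = u (g K)"
      using antimono_nat_seq_eventually_const[of "u \<circ> g"] by auto
    have "strict_mono (\<lambda>k. g (K + k))"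
      using g(1) by (simp add: strict_mono_def)
    moreover have "mono (u \<circ> (\<lambda>k. g (K + k)))"
      using K[rule_format, OF le_add1] by (intro monoI) simp
    ultimately show ?thesis by blast
  qed
qed

lemma dickson_subseq:
  fixes V :: "nat \<Rightarrow> 'a \<Rightarrow> nat"
  assumes "finite S"
  shows "\<exists>\<sigma> :: nat \<Rightarrow> nat. strict_mono \<sigma> \<and> (\<forall>s\<in>S. mono (\<lambda>k. V (\<sigma> k) s))"
  using assms
proof (induction S rule: finite_induct)
  case empty
  show ?case using strict_mono_id by blast
next
  case (insert a S)
  then obtain \<sigma> :: "nat \<Rightarrow> nat" where \<sigma>: "strict_mono \<sigma>" "\<forall>s\<in>S. mono (\<lambda>k. V (\<sigma> k) s)"
    by blast
  obtain g :: "nat \<Rightarrow> nat" where g: "strict_mono g" "mono ((\<lambda>k. V (\<sigma> k) a) \<circ> g)"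
    using mono_subseq_nat by blast
  have "mono (\<lambda>k. V (\<sigma> (g k)) s)" if "s \<in> S" for s
    using \<sigma>(2) that g(1) by (auto simp: mono_def strict_mono_less_eq)
  with g have "\<forall>s\<in>insert a S. mono (\<lambda>k. V ((\<sigma> \<circ> g) k) s)"
    by (auto simp: o_def)
  moreover have "strict_mono (\<sigma> \<circ> g)"
    using \<sigma>(1) g(1) by (simp add: strict_mono_def)
  ultimately show ?case by blast
qed

lemma mono_vector_seq_eventually_const_or_unbounded:
  fixes W :: "nat \<Rightarrow> 'a \<Rightarrow> nat"
  assumes "finite S" and mono: "\<And>s. s \<in> S \<Longrightarrow> mono (\<lambda>k. W k s)"
  shows "\<exists>k0. \<forall>s\<in>S. (\<forall>k\<ge>k0. W k s = W k0 s) \<or> filterlim (\<lambda>k. W k s) at_top sequentially"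
proof -
  have "\<forall>\<^sub>F k0 in sequentially. (\<forall>k\<ge>k0. W k s = W k0 s) \<or> filterlim (\<lambda>k. W k s) at_top sequentially"
    if "s \<in> S" for s
    using mono_nat_seq_eventually_const_or_filterlim_at_top[OF mono[OF that]]
  proof
    assume "\<exists>c. \<forall>\<^sub>F k in sequentially. W k s = c"
    then obtain c K where const: "\<And>k. K \<le> k \<Longrightarrow> W k s = c"
      unfolding eventually_sequentially by blast
    have "\<forall>k\<ge>k0. W k s = W k0 s" if "K \<le> k0" for k0
      using const[OF that] const that by simp
    then show ?thesis
      unfolding eventually_sequentially by blast
  qed simp
  then have "\<forall>\<^sub>F k0 in sequentially. \<forall>s\<in>S.
      (\<forall>k\<ge>k0. W k s = W k0 s) \<or> filterlim (\<lambda>k. W k s) at_top sequentially"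
    using assms(1) by (intro eventually_ball_finite) auto
  then show ?thesis
    unfolding eventually_sequentially by blast
qed

lemma mono_vector_seq_pumping:
  fixes W :: "nat \<Rightarrow> 'a \<Rightarrow> nat"
  assumes "finite S" and mono: "\<And>s. s \<in> S \<Longrightarrow> mono (\<lambda>k. W k s)"
    and outside: "\<And>k s. s \<notin> S \<Longrightarrow> W k s = 0"
  shows "\<exists>k0. \<forall>n. \<exists>l. (\<lambda>s. W k0 s + n * (W (Suc k0) s - W k0 s)) \<le> W l"
proof -
  have "\<exists>k0. \<forall>s\<in>S. (\<forall>k\<ge>k0. W k s = W k0 s) \<or> filterlim (\<lambda>k. W k s) at_top sequentially"
    using assms(1) mono by (rule mono_vector_seq_eventually_const_or_unbounded)
  then obtain k0 where split:
    "\<forall>s\<in>S. (\<forall>k\<ge>k0. W k s = W k0 s) \<or> filterlim (\<lambda>k. W k s) at_top sequentially"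
    by blast
  have "\<exists>l. (\<lambda>s. W k0 s + n * (W (Suc k0) s - W k0 s)) \<le> W l" for n
  proof -
    define T where "T s = W k0 s + n * (W (Suc k0) s - W k0 s)" for s
    have "\<forall>\<^sub>F k in sequentially. T s \<le> W k s" if "s \<in> S" for s
      using split[rule_format, OF that]
    proof
      assume const: "\<forall>k\<ge>k0. W k s = W k0 s"
      have "T s \<le> W k s" if "k0 \<le> k" for k
        using const[rule_format, OF that] const[rule_format, of "Suc k0"] unfolding T_def by simp
      then show ?thesis
        unfolding eventually_sequentially by blast
    next
      assume "filterlim (\<lambda>k. W k s) at_top sequentially"
      then show ?thesis
        by (simp add: filterlim_at_top)
    qed
    then have "\<forall>\<^sub>F k in sequentially. \<forall>s\<in>S. T s \<le> W k s"
      using assms(1) by (intro eventually_ball_finite) auto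
    then obtain l where l: "\<forall>s\<in>S. T s \<le> W l s"
      unfolding eventually_sequentially by blast
    have "T \<le> W l"
    proof (rule le_funI)
      fix s
      show "T s \<le> W l s"
        using l outside by (cases "s \<in> S") (auto simp: T_def)
    qed
    then show ?thesis
      unfolding T_def by blast
  qed
  then show ?thesis
    by blast
qed

lemma nat_vector_seq_pumping:
  fixes V :: "nat \<Rightarrow> 'a \<Rightarrow> nat"
  assumes "finite S" and outside: "\<And>k s. s \<notin> S \<Longrightarrow> V k s = 0"
  shows "\<exists>i j. i < j \<and> V i \<le> V j \<and> (\<forall>n. \<exists>l. (\<lambda>s. V i s + n * (V j s - V i s)) \<le> V l)"
proof -
  obtain \<sigma> :: "nat \<Rightarrow> nat" where \<sigma>: "strict_mono \<sigma>" and mono: "\<And>s. s \<in> S \<Longrightarrow> mono (\<lambda>k. V (\<sigma> k) s)"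
    using dickson_subseq[OF assms(1)] by blast
  have "\<exists>k0. \<forall>n. \<exists>l. (\<lambda>s. V (\<sigma> k0) s + n * (V (\<sigma> (Suc k0)) s - V (\<sigma> k0) s)) \<le> V (\<sigma> l)"
    using assms(1) mono outside by (rule mono_vector_seq_pumping[where W = "\<lambda>k. V (\<sigma> k)"])
  then obtain k0 where dominated:
      "\<forall>n. \<exists>l. (\<lambda>s. V (\<sigma> k0) s + n * (V (\<sigma> (Suc k0)) s - V (\<sigma> k0) s)) \<le> V (\<sigma> l)"
    by blast
  have "\<sigma> k0 < \<sigma> (Suc k0)"
    using \<sigma> by (simp add: strict_mono_def)
  moreover have "V (\<sigma> k0) \<le> V (\<sigma> (Suc k0))"
  proof (rule le_funI)
    fix s
    show "V (\<sigma> k0) s \<le> V (\<sigma> (Suc k0)) s"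
    proof (cases "s \<in> S")
      case True
      show ?thesis
        using mono[OF True] by (rule monoD) simp
    next
      case False
      then show ?thesis
        using outside by simp
    qed
  qed
  ultimately show ?thesis
    using dominated by blast
qed

lemma eventually_sequentially_by_residues:
  assumes "0 < P" and "\<And>r. r < P \<Longrightarrow> \<forall>\<^sub>F k in sequentially. Q (N + r + k * P)"
  shows "\<forall>\<^sub>F x in sequentially. Q x"
proof -
  have "\<forall>\<^sub>F k in sequentially. \<forall>r\<in>{..<P}. Q (N + r + k * P)"
    using assms(2) by (intro eventually_ball_finite) auto
  then obtain K where K: "\<And>k r. K \<le> k \<Longrightarrow> r < P \<Longrightarrow> Q (N + r + k * P)"
    unfolding eventually_sequentially by blast
  have "Q x" if "N + K * P \<le> x" for x
  proof -
    have "x = N + (x - N) mod P + (x - N) div P * P"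
      using that by simp
    moreover have "K \<le> (x - N) div P"
      using that assms(1) by (simp add: less_eq_div_iff_mult_less_eq)
    ultimately show ?thesis
      using K[of "(x - N) div P" "(x - N) mod P"] assms(1) by (metis mod_less_divisor)
  qed
  then show ?thesis
    unfolding eventually_sequentially by blast
qed

lemma eventually_step_eq_if_step_ge_and_bounded:
  fixes u :: "nat \<Rightarrow> nat"
  assumes step: "\<And>k. u k + c \<le> u (Suc k)" and bound: "\<And>k. u k \<le> B + k * c"
  shows "\<forall>\<^sub>F k in sequentially. u (Suc k) = u k + c"
proof -
  have lower: "k * c \<le> u k" for k
    by (induction k) (use step in \<open>auto intro: order_trans[OF _ step]\<close>)
  define v where "v k = u k - k * c" for k
  have "mono v"
    unfolding mono_iff_le_Suc
  proof
    fix k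
    show "v k \<le> v (Suc k)"
      unfolding v_def using step[of k] lower[of k] by simp
  qed
  moreover have "v k \<le> B" for k
    unfolding v_def using bound[of k] by simp
  ultimately obtain b where "\<forall>\<^sub>F k in sequentially. v k = b"
    using mono_bounded_nat_seq_eventually_const by blast
  then have "\<forall>\<^sub>F k in sequentially. v (Suc k) = v k"
    unfolding eventually_sequentially by (metis le_SucI)
  then show ?thesis
  proof eventually_elim
    case (elim k)
    then show ?case
      unfolding v_def mult_Suc using step[of k] lower[of k] by arith
  qed
qed

section \<open>Eventually quasilinear functions\<close>

definition eventually_quasilinear :: "(nat \<Rightarrow> nat) \<Rightarrow> bool" where
  "eventually_quasilinear f \<longleftrightarrow> (\<exists>N P c. 0 < P \<and> (\<forall>x\<ge>N. f (x + P) = f x + c))"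

lemma quasilinear_iterate:
  fixes f :: "nat \<Rightarrow> 'a::semiring_1"
  assumes "\<And>x. N \<le> x \<Longrightarrow> f (x + P) = f x + c" and "N \<le> x"
  shows "f (x + m * P) = f x + of_nat m * c"
proof (induction m)
  case 0
  show ?case by simp
next
  case (Suc m)
  have "f (x + Suc m * P) = f (x + m * P + P)"
    by (simp add: ac_simps)
  also have "\<dots> = f (x + m * P) + c"
    using assms by simp
  finally show ?case
    using Suc.IH by (simp add: algebra_simps)
qed

lemma periodic_iterate:
  fixes g :: "nat \<Rightarrow> 'a"
  assumes "\<And>x. N \<le> x \<Longrightarrow> g (x + P) = g x" and "N \<le> x"
  shows "g (x + k * P) = g x"
proof (induction k)
  case (Suc k)
  have "g (x + Suc k * P) = g (x + k * P + P)"
    by (simp add: ac_simps)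
  also have "\<dots> = g (x + k * P)"
    using assms by simp
  finally show ?case
    using Suc.IH by simp
qed simp

lemma eventually_quasilinear_if_mono_and_bounds:
  assumes "mono f" and "0 < P"
    and lower: "\<And>x. N \<le> x \<Longrightarrow> f x + c \<le> f (x + P)"
    and upper: "\<And>n. f (N + n * P) \<le> f N + n * c"
  shows "eventually_quasilinear f"
proof -
  have residue: "\<forall>\<^sub>F k in sequentially. f (N + r + k * P + P) = f (N + r + k * P) + c"
    if "r < P" for r
  proof -
    have "\<forall>\<^sub>F k in sequentially. f (N + r + Suc k * P) = f (N + r + k * P) + c"
    proof (rule eventually_step_eq_if_step_ge_and_bounded)
      show "f (N + r + k * P) + c \<le> f (N + r + Suc k * P)" for k
        using lower[of "N + r + k * P"] by (simp add: algebra_simps)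
      show "f (N + r + k * P) \<le> f N + c + k * c" for k
      proof -
        have "f (N + r + k * P) \<le> f (N + Suc k * P)"
          using that by (intro monoD[OF assms(1)]) simp
        also have "\<dots> \<le> f N + Suc k * c"
          by (rule upper)
        finally show ?thesis by simp
      qed
    qed
    then show ?thesis by (simp add: algebra_simps)
  qed
  have "\<forall>\<^sub>F x in sequentially. f (x + P) = f x + c"
    using eventually_sequentially_by_residues[OF assms(2) residue] .
  then show ?thesis
    unfolding eventually_quasilinear_def eventually_sequentially using assms(2) by blast
qed

lemma int_linear_growth_le:
  fixes a b p q :: int
  assumes "\<And>k::nat. a + int k * p \<le> b + int k * q"
  shows "p \<le> q"
proof (rule ccontr)
  assume "\<not> p \<le> q"
  define k where "k = nat (b - a) + 1"
  have "int k * (p - q) \<le> b - a"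
    using assms[of k] by (simp add: algebra_simps)
  moreover have "int k * 1 \<le> int k * (p - q)"
    using \<open>\<not> p \<le> q\<close> by (intro mult_left_mono) auto
  moreover have "b - a < int k"
    unfolding k_def by simp
  ultimately show False
    by linarith
qed

lemma periodic_nondecreasing_const:
  fixes g :: "nat \<Rightarrow> 'a::order"
  assumes "0 < P"
    and periodic: "\<And>x. N \<le> x \<Longrightarrow> g (x + P) = g x"
    and step: "\<And>x. N \<le> x \<Longrightarrow> g x \<le> g (Suc x)"
    and "N \<le> x"
  shows "g x = g N"
proof (rule antisym)
  have up: "g y \<le> g z" if "N \<le> y" "y \<le> z" for y z
    using that(2)
  proof (induction z rule: dec_induct)
    case (step z)
    have "N \<le> z"
      using \<open>N \<le> y\<close> \<open>y \<le> z\<close> by simp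
    show ?case
      using order_trans[OF step.IH assms(3)[OF \<open>N \<le> z\<close>]] .
  qed simp
  have "x \<le> N + x * P"
    using \<open>0 < P\<close> by (simp add: trans_le_add2)
  then have "g x \<le> g (N + x * P)"
    by (rule up[OF \<open>N \<le> x\<close>])
  also have "\<dots> = g N"
    using periodic_iterate[of N g P N x] periodic by simp
  finally show "g x \<le> g N" .
  show "g N \<le> g x"
    using up[OF order.refl \<open>N \<le> x\<close>] .
qed

text \<open>Along a progression \<open>x + k P\<close> the function grows linearly with slope given by the increment
  at \<open>x\<close>; comparing the progressions through \<open>x\<close> and \<open>x + 1\<close> for large \<open>k\<close>, monotonicity forces
  nondecreasing increments, and periodic nondecreasing increments are constant.\<close>

lemma mono_periodic_increment_const:
  fixes f :: "nat \<Rightarrow> nat" and P :: nat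
  defines "g x \<equiv> int (f (x + P)) - int (f x)"
  assumes "mono f" and "0 < P" and periodic: "\<And>x. N \<le> x \<Longrightarrow> g (x + P) = g x" and "N \<le> x"
  shows "g x = g N"
proof -
  have progression: "int (f (x + k * P)) = int (f x) + int k * g x" if "N \<le> x" for x k
  proof (induction k)
    case (Suc k)
    have "g (x + k * P) = g x"
      using periodic_iterate[of N g P x k] periodic that by blast
    then show ?case
      using Suc.IH unfolding g_def by (simp add: algebra_simps)
  qed simp
  have step: "g x \<le> g (Suc x)" if "N \<le> x" for x
  proof (rule int_linear_growth_le)
    show "int (f x) + int k * g x \<le> int (f (Suc x)) + int k * g (Suc x)" for k
      using progression[OF that, of k] progression[of "Suc x" k] that
        monoD[OF assms(2), of "x + k * P" "Suc x + k * P"]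
      by simp
  qed
  show ?thesis
    using assms(3) periodic step assms(5) by (rule periodic_nondecreasing_const)
qed

lemma eventually_quasilinear_if_mono_and_affine_on_period:
  assumes "mono f" and "0 < P"
    and "\<forall>\<^sub>F x in sequentially. f (x + 2 * P) + f x = 2 * f (x + P)"
  shows "eventually_quasilinear f"
proof -
  obtain N where affine: "\<And>x. N \<le> x \<Longrightarrow> f (x + 2 * P) + f x = 2 * f (x + P)"
    using assms(3) unfolding eventually_sequentially by auto
  define g where "g x = int (f (x + P)) - int (f x)" for x
  have periodic: "g (x + P) = g x" if "N \<le> x" for x
  proof -
    have "f (x + P + P) + f x = 2 * f (x + P)"
      using affine[OF that] by (simp add: mult_2 add.assoc)
    then show ?thesis
      unfolding g_def by linarith
  qed
  have "0 \<le> g N"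
    unfolding g_def using monoD[OF assms(1), of N "N + P"] by simp
  have "int (f (x + P)) = int (f x + nat (g N))" if "N \<le> x" for x
  proof -
    have "g x = g N"
      using assms(1,2) periodic that unfolding g_def by (rule mono_periodic_increment_const)
    then show ?thesis
      using \<open>0 \<le> g N\<close> unfolding g_def[of x] by simp
  qed
  then have "f (x + P) = f x + nat (g N)" if "N \<le> x" for x
    using that by (simp only: of_nat_eq_iff)
  then show ?thesis
    unfolding eventually_quasilinear_def using assms(2) by blast
qed

section \<open>Semilinear sets and functions\<close>

definition eventually_periodic :: "nat set \<Rightarrow> nat \<Rightarrow> bool" where
  "eventually_periodic A P \<longleftrightarrow> (\<forall>\<^sub>F x in sequentially. x + P \<in> A \<longleftrightarrow> x \<in> A)"

lemma eventually_periodic_mult: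
  assumes "eventually_periodic A P"
  shows "eventually_periodic A (k * P)"
proof -
  obtain N where "\<And>x. N \<le> x \<Longrightarrow> x + P \<in> A \<longleftrightarrow> x \<in> A"
    using assms unfolding eventually_periodic_def eventually_sequentially by blast
  then have "x + k * P \<in> A \<longleftrightarrow> x \<in> A" if "N \<le> x" for x
    using periodic_iterate[of N "\<lambda>x. x \<in> A"] that by blast
  then show ?thesis
    unfolding eventually_periodic_def eventually_sequentially by blast
qed

lemma eventually_periodic_common_multiple:
  assumes "eventually_periodic A P" and "eventually_periodic B Q"
  shows "eventually_periodic A (P * Q)" and "eventually_periodic B (P * Q)"
  using eventually_periodic_mult[OF assms(1), of Q] eventually_periodic_mult[OF assms(2), of P]
  by (simp_all add: mult.commute)

lemma eventually_periodic_Un: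
  assumes "eventually_periodic A P" and "eventually_periodic B Q"
  shows "eventually_periodic (A \<union> B) (P * Q)"
  using eventually_periodic_common_multiple[OF assms] unfolding eventually_periodic_def
  by (rule eventually_elim2) auto

lemma eventually_periodic_Int:
  assumes "eventually_periodic A P" and "eventually_periodic B Q"
  shows "eventually_periodic (A \<inter> B) (P * Q)"
  using eventually_periodic_common_multiple[OF assms] unfolding eventually_periodic_def
  by (rule eventually_elim2) auto

lemma eventually_threshold_const:
  fixes a b :: int
  shows "\<forall>\<^sub>F x in sequentially. b \<le> a * int x \<longleftrightarrow> 0 < a \<or> a = 0 \<and> b \<le> 0"
proof -
  have "b \<le> a * int x \<longleftrightarrow> 0 < a \<or> a = 0 \<and> b \<le> 0" if "nat \<bar>b\<bar> < x" for x
  proof (cases a "0::int" rule: linorder_cases)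
    case less
    then have "a * int x \<le> -1 * int x"
      by (intro mult_right_mono) simp_all
    then show ?thesis using less that by linarith
  next
    case greater
    then have "1 * int x \<le> a * int x"
      by (intro mult_right_mono) simp_all
    then show ?thesis using greater that by linarith
  qed simp
  then show ?thesis
    unfolding eventually_sequentially by (intro exI[of _ "Suc (nat \<bar>b\<bar>)"]) (simp add: Suc_le_eq)
qed

lemma semilinear_set_eventually_periodic:
  assumes "semilinear_set A"
  shows "\<exists>P>0. eventually_periodic A P"
  using assms
proof (induction rule: semilinear_set.induct)
  case (threshold a b)
  obtain N where N: "\<And>x. N \<le> x \<Longrightarrow> b \<le> a * int x \<longleftrightarrow> 0 < a \<or> a = 0 \<and> b \<le> 0"
    using eventually_threshold_const[of b a] unfolding eventually_sequentially by blast
  have "\<forall>x\<ge>N. x + 1 \<in> {x. b \<le> a * int x} \<longleftrightarrow> x \<in> {x. b \<le> a * int x}"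
  proof (intro allI impI)
    fix x
    assume "N \<le> x"
    then show "x + 1 \<in> {x. b \<le> a * int x} \<longleftrightarrow> x \<in> {x. b \<le> a * int x}"
      using N[of x] N[of "x + 1"] by (simp del: of_nat_add)
  qed
  then have "eventually_periodic {x. b \<le> a * int x} 1"
    unfolding eventually_periodic_def eventually_sequentially by blast
  then show ?case by blast
next
  case (modset c a b)
  have "a * int (x + c) mod int c = a * int x mod int c" for x
    by (simp add: algebra_simps)
  then have "eventually_periodic {x. a * int x mod int c = b mod int c} c"
    unfolding eventually_periodic_def by simp
  then show ?case using modset.hyps by blast
next
  case (compl A)
  then show ?case
    unfolding eventually_periodic_def by simp
next
  case (union A B)
  then obtain P Q where "0 < P" "0 < Q" and periodic: "eventually_periodic A P" "eventually_periodic B Q"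
    by blast
  then have "0 < P * Q" and "eventually_periodic (A \<union> B) (P * Q)"
    by (simp_all add: eventually_periodic_Un)
  then show ?case by blast
next
  case (inter A B)
  then obtain P Q where "0 < P" "0 < Q" and periodic: "eventually_periodic A P" "eventually_periodic B Q"
    by blast
  then have "0 < P * Q" and "eventually_periodic (A \<inter> B) (P * Q)"
    by (simp_all add: eventually_periodic_Int)
  then show ?case by blast
qed

lemma semilinear_sets_common_period:
  assumes "finite I" and "\<And>i. i \<in> I \<Longrightarrow> semilinear_set (D i)"
  shows "\<exists>P>0. \<forall>i\<in>I. eventually_periodic (D i) P"
  using assms
proof (induction I rule: finite_induct)
  case empty
  show ?case by auto
next
  case (insert i I)
  then obtain P where "0 < P" and periodic: "\<forall>j\<in>I. eventually_periodic (D j) P"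
    by blast
  obtain Q where "0 < Q" and "eventually_periodic (D i) Q"
    using semilinear_set_eventually_periodic insert.prems by blast
  have "eventually_periodic (D i) (P * Q)"
    using \<open>eventually_periodic (D i) Q\<close> by (rule eventually_periodic_mult)
  moreover have "eventually_periodic (D j) (P * Q)" if "j \<in> I" for j
    using eventually_periodic_mult[of "D j" P Q] periodic that by (simp add: mult.commute)
  ultimately have "\<forall>j\<in>insert i I. eventually_periodic (D j) (P * Q)"
    by blast
  moreover have "0 < P * Q"
    using \<open>0 < P\<close> \<open>0 < Q\<close> by simp
  ultimately show ?case by blast
qed

lemma semilinear_funI:
  fixes D :: "nat \<Rightarrow> nat set" and a b :: "nat \<Rightarrow> rat"
  assumes "\<And>i. i < n \<Longrightarrow> semilinear_set (D i)"
    and "\<And>i j. i < n \<Longrightarrow> j < n \<Longrightarrow> i \<noteq> j \<Longrightarrow> D i \<inter> D j = {}"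
    and "\<And>x. \<exists>i<n. x \<in> D i"
    and "\<And>i x. i < n \<Longrightarrow> x \<in> D i \<Longrightarrow> of_nat (f x) = a i * of_nat x + b i"
  shows "semilinear_fun f"
  unfolding semilinear_fun_def
proof (intro exI[of _ "map (\<lambda>i. (a i, b i, D i)) [0..<n]"] conjI allI)
  fix x
  obtain i where "i < n" "x \<in> D i"
    using assms(3) by blast
  then show "\<exists>i<length (map (\<lambda>i. (a i, b i, D i)) [0..<n]). x \<in> snd (snd (map (\<lambda>i. (a i, b i, D i)) [0..<n] ! i))"
    by (intro exI[of _ i]) simp
qed (simp_all add: assms)

lemma semilinear_funE:
  assumes "semilinear_fun f"
  obtains n and D :: "nat \<Rightarrow> nat set" and a b :: "nat \<Rightarrow> rat"
  where "\<And>i. i < n \<Longrightarrow> semilinear_set (D i)"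
    and "\<And>x. \<exists>i<n. x \<in> D i"
    and "\<And>i x. i < n \<Longrightarrow> x \<in> D i \<Longrightarrow> of_nat (f x) = a i * of_nat x + b i"
proof -
  obtain pieces :: "(rat \<times> rat \<times> nat set) list"
    where "\<forall>i<length pieces. semilinear_set (snd (snd (pieces ! i)))"
      and "\<forall>x. \<exists>i<length pieces. x \<in> snd (snd (pieces ! i))"
      and "\<forall>i<length pieces. \<forall>x\<in>snd (snd (pieces ! i)).
             of_nat (f x) = fst (pieces ! i) * of_nat x + fst (snd (pieces ! i))"
    using assms unfolding semilinear_fun_def by blast
  then show thesis
    using that[of "length pieces" "\<lambda>i. snd (snd (pieces ! i))" "\<lambda>i. fst (pieces ! i)"
        "\<lambda>i. fst (snd (pieces ! i))"]
    by blast
qed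

lemma semilinear_set_singleton: "semilinear_set {k}"
proof -
  have "{k} = {x. int k \<le> 1 * int x} \<inter> {x. - int k \<le> -1 * int x}"
    by auto
  then show ?thesis
    by (simp only:) (intro semilinear_set.inter semilinear_set.threshold)
qed

lemma semilinear_set_residue_class:
  assumes "0 < P" and "r < P"
  shows "semilinear_set {x. N \<le> x \<and> (x - N) mod P = r}"
proof -
  have "(x - N) mod P = r \<longleftrightarrow> 1 * int x mod int P = int (N + r) mod int P" if "N \<le> x" for x
  proof -
    have "(x - N) mod P = r \<longleftrightarrow> int (x - N) mod int P = int r mod int P"
      using assms(2) by (simp flip: of_nat_mod)
    also have "\<dots> \<longleftrightarrow> int P dvd int (x - N) - int r"
      by (rule mod_eq_dvd_iff)
    also have "\<dots> \<longleftrightarrow> int P dvd int x - int (N + r)"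
      using that by (simp add: of_nat_diff algebra_simps)
    also have "\<dots> \<longleftrightarrow> 1 * int x mod int P = int (N + r) mod int P"
      by (simp add: mod_eq_dvd_iff)
    finally show ?thesis .
  qed
  then have "{x. N \<le> x \<and> (x - N) mod P = r}
      = {x. int N \<le> 1 * int x} \<inter> {x. 1 * int x mod int P = int (N + r) mod int P}"
    by auto
  then show ?thesis
    using assms(1) by (simp only:) (intro semilinear_set.inter semilinear_set.threshold semilinear_set.modset)
qed

lemma quasilinear_offset_eq_if_le:
  fixes f :: "nat \<Rightarrow> nat"
  assumes "0 < P" and step: "\<And>x. N \<le> x \<Longrightarrow> f (x + P) = f x + c"
    and "N \<le> x" and "x \<le> y" and "(x - N) mod P = (y - N) mod P"
  shows "of_nat (f x) - of_nat c / of_nat P * of_nat x = (of_nat (f y) - of_nat c / of_nat P * of_nat y :: rat)"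
proof -
  have "P dvd (y - N) - (x - N)"
    using mod_eq_dvd_iff_nat[of "x - N" "y - N" P] assms(3-5) by simp
  then obtain m where "y - x = P * m"
    using assms(3) by (auto elim: dvdE)
  then have y: "y = x + m * P"
    using assms(4) by (simp add: mult.commute)
  then have "f y = f x + m * c"
    using quasilinear_iterate[of N f P c, OF step \<open>N \<le> x\<close>, of m] by simp
  then show ?thesis
    unfolding y using \<open>0 < P\<close> by (simp add: field_simps)
qed

lemma quasilinear_offset_eq:
  fixes f :: "nat \<Rightarrow> nat"
  assumes "0 < P" and "\<And>x. N \<le> x \<Longrightarrow> f (x + P) = f x + c"
    and "N \<le> x" and "N \<le> y" and "(x - N) mod P = (y - N) mod P"
  shows "of_nat (f x) - of_nat c / of_nat P * of_nat x = (of_nat (f y) - of_nat c / of_nat P * of_nat y :: rat)"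
proof (cases "x \<le> y")
  case True
  with assms show ?thesis
    by (intro quasilinear_offset_eq_if_le) auto
next
  case False
  with assms have "of_nat (f y) - of_nat c / of_nat P * of_nat y
      = (of_nat (f x) - of_nat c / of_nat P * of_nat x :: rat)"
    by (intro quasilinear_offset_eq_if_le) auto
  then show ?thesis
    by simp
qed

lemma semilinear_fun_if_eventually_quasilinear:
  assumes "eventually_quasilinear f"
  shows "semilinear_fun f"
proof -
  obtain N P c where "0 < P" and step: "\<And>x. N \<le> x \<Longrightarrow> f (x + P) = f x + c"
    using assms unfolding eventually_quasilinear_def by blast
  define D where "D i = (if i < N then {i} else {x. N \<le> x \<and> (x - N) mod P = i - N})" for i
  define a :: "nat \<Rightarrow> rat" where "a i = (if i < N then 0 else of_nat c / of_nat P)" for i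
  define b where "b i = of_nat (f i) - a i * of_nat i" for i
  show ?thesis
  proof (rule semilinear_funI[of "N + P" D f a b])
    show "semilinear_set (D i)" if "i < N + P" for i
      unfolding D_def using that \<open>0 < P\<close> semilinear_set_singleton semilinear_set_residue_class by auto
    show "D i \<inter> D j = {}" if "i < N + P" "j < N + P" "i \<noteq> j" for i j
      unfolding D_def using that by auto
    show "\<exists>i<N + P. x \<in> D i" for x
    proof (cases "x < N")
      case True
      then show ?thesis
        unfolding D_def by (intro exI[of _ x]) auto
    next
      case False
      then show ?thesis
        unfolding D_def using \<open>0 < P\<close> by (intro exI[of _ "N + (x - N) mod P"]) auto
    qed
    show "of_nat (f x) = a i * of_nat x + b i" if "i < N + P" "x \<in> D i" for i x
    proof (cases "i < N")
      case True
      then show ?thesis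
        using that unfolding D_def a_def b_def by simp
    next
      case False
      then have "N \<le> x" and "(x - N) mod P = (i - N) mod P"
        using that unfolding D_def by auto
      then have "of_nat (f x) - of_nat c / of_nat P * of_nat x
          = (of_nat (f i) - of_nat c / of_nat P * of_nat i :: rat)"
        using \<open>0 < P\<close> step False by (intro quasilinear_offset_eq) auto
      then show ?thesis
        unfolding a_def b_def if_not_P[OF False] by linarith
    qed
  qed
qed

lemma semilinear_fun_eventually_affine_on_period:
  assumes "semilinear_fun f"
  obtains P where "0 < P" and "\<forall>\<^sub>F x in sequentially. f (x + 2 * P) + f x = 2 * f (x + P)"
proof -
  obtain n and D :: "nat \<Rightarrow> nat set" and a b :: "nat \<Rightarrow> rat"
    where semilinear: "\<And>i. i < n \<Longrightarrow> semilinear_set (D i)"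
      and cover: "\<And>x. \<exists>i<n. x \<in> D i"
      and affine: "\<And>i x. i < n \<Longrightarrow> x \<in> D i \<Longrightarrow> of_nat (f x) = a i * of_nat x + b i"
    using semilinear_funE[OF assms] by blast
  obtain P where "0 < P" and "\<forall>i\<in>{..<n}. eventually_periodic (D i) P"
    using semilinear_sets_common_period[of "{..<n}" D] semilinear by auto
  then have periodic: "\<forall>\<^sub>F x in sequentially. \<forall>i\<in>{..<n}. x + P \<in> D i \<longleftrightarrow> x \<in> D i"
    unfolding eventually_periodic_def by (intro eventually_ball_finite) auto
  moreover have "\<forall>\<^sub>F x in sequentially. \<forall>i\<in>{..<n}. x + P + P \<in> D i \<longleftrightarrow> x + P \<in> D i"
    using periodic eventually_sequentially_seg[of "\<lambda>x. \<forall>i\<in>{..<n}. x + P \<in> D i \<longleftrightarrow> x \<in> D i" P]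
    by simp
  ultimately have "\<forall>\<^sub>F x in sequentially. f (x + 2 * P) + f x = 2 * f (x + P)"
  proof eventually_elim
    case (elim x)
    obtain i where "i < n" "x \<in> D i"
      using cover by blast
    have "x + P \<in> D i"
      using elim(1) \<open>i < n\<close> \<open>x \<in> D i\<close> by simp
    moreover have "x + 2 * P \<in> D i"
      using elim(2) \<open>i < n\<close> \<open>x + P \<in> D i\<close> by (simp add: mult_2 add.assoc)
    ultimately have "(of_nat (f (x + 2 * P) + f x) :: rat) = of_nat (2 * f (x + P))"
      using affine[OF \<open>i < n\<close>] \<open>x \<in> D i\<close> by (simp add: algebra_simps)
    then show ?case
      by (simp only: of_nat_eq_iff)
  qed
  with \<open>0 < P\<close> show thesis by (rule that)
qed

lemma mono_imp_semilinear_fun_iff_eventually_quasilinear: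
  assumes "mono f"
  shows "semilinear_fun f \<longleftrightarrow> eventually_quasilinear f"
proof
  assume "semilinear_fun f"
  then obtain P where "0 < P" and "\<forall>\<^sub>F x in sequentially. f (x + 2 * P) + f x = 2 * f (x + P)"
    by (rule semilinear_fun_eventually_affine_on_period)
  with assms show "eventually_quasilinear f"
    by (rule eventually_quasilinear_if_mono_and_affine_on_period)
next
  assume "eventually_quasilinear f"
  then show "semilinear_fun f"
    by (rule semilinear_fun_if_eventually_quasilinear)
qed

section \<open>Reachability\<close>

lemma reachable_refl [simp]: "reachable R C C"
  unfolding reachable_def by simp

lemma reachable_trans [trans]: "reachable R C D \<Longrightarrow> reachable R D E \<Longrightarrow> reachable R C E"
  unfolding reachable_def by simp

lemma step_relI: "rp \<in> R \<Longrightarrow> applicable rp C \<Longrightarrow> (C, apply_reaction rp C) \<in> step_rel R"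
  unfolding step_rel_def by blast

lemma step_rel_add:
  assumes "(C, D) \<in> step_rel R"
  shows "(C + E, D + E) \<in> step_rel R"
proof -
  obtain rp where rp: "rp \<in> R" "applicable rp C" and D: "D = apply_reaction rp C"
    using assms unfolding step_rel_def by blast
  have applicable: "applicable rp (C + E)"
    using rp(2) unfolding applicable_def by (simp add: trans_le_add1)
  have "apply_reaction rp (C + E) = D + E"
  proof
    fix s
    have "fst rp s \<le> C s"
      using rp(2) unfolding applicable_def by blast
    then show "apply_reaction rp (C + E) s = (D + E) s"
      unfolding D apply_reaction_def by simp
  qed
  then show ?thesis
    using step_relI[OF rp(1) applicable] by simp
qed

lemma reachable_add:
  assumes "reachable R C D"
  shows "reachable R (C + E) (D + E)"
  using assms unfolding reachable_def
proof (induction rule: rtrancl_induct)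
  case (step D D')
  from step.IH step_rel_add[OF step.hyps(2)] show ?case
    by (rule rtrancl_into_rtrancl)
qed simp

lemma reachable_output_mono:
  assumes "output_oblivious R Y" and "reachable R C D"
  shows "C Y \<le> D Y"
  using assms(2) unfolding reachable_def
proof (induction rule: rtrancl_induct)
  case (step D D')
  then obtain rp where "rp \<in> R" and "D' = apply_reaction rp D"
    unfolding step_rel_def by blast
  with assms(1) have "D Y \<le> D' Y"
    unfolding output_oblivious_def apply_reaction_def by simp
  with step.IH show ?case by simp
qed simp

text \<open>Every run from \<open>C\<close> can be replayed from \<open>C'\<close>, carrying the surplus \<open>C' - C\<close> along
  untouched.\<close>

lemma stable_le:
  assumes "stable R Y C'" and "C \<le> C'"
  shows "stable R Y C"
  unfolding stable_def
proof (intro allI impI)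
  fix D
  assume "reachable R C D"
  then have "reachable R (C + (C' - C)) (D + (C' - C))"
    by (rule reachable_add)
  moreover have "C + (C' - C) = C'"
  proof
    fix s
    have "C s \<le> C' s"
      using assms(2) by (rule le_funD)
    then show "(C + (C' - C)) s = C' s"
      by simp
  qed
  ultimately have "reachable R C' (D + (C' - C))"
    by simp
  then have "(D + (C' - C)) Y = C' Y"
    using assms(1) unfolding stable_def by blast
  then have "D Y + (C' Y - C Y) = C' Y"
    by simp
  moreover have "C Y \<le> C' Y"
    using assms(2) by (rule le_funD)
  ultimately show "D Y = C Y"
    by simp
qed

lemma reachable_support:
  assumes "valid_crn S R X Y L" and "reachable R (init_config X L x) C" and "s \<notin> S"
  shows "C s = 0"
  using assms(2) unfolding reachable_def
proof (induction rule: rtrancl_induct)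
  case base
  then show ?case
    using assms(1,3) unfolding valid_crn_def init_config_def by auto
next
  case (step D D')
  then obtain r p where "(r, p) \<in> R" and D': "D' = apply_reaction (r, p) D"
    unfolding step_rel_def by auto
  then have "r s = 0" and "p s = 0"
    using assms(1,3) unfolding valid_crn_def by auto
  with step.IH show ?case
    unfolding D' apply_reaction_def by simp
qed

lemma init_config_add:
  assumes "X \<noteq> L"
  shows "init_config X L (x + m) = init_config X L x + (0 :: config)(X := m)"
  using assms unfolding init_config_def by (auto simp: fun_eq_iff)

section \<open>Output-oblivious CRNs compute eventually quasilinear functions\<close>

locale oblivious_crn =
  fixes S :: "nat set" and R :: "reaction set" and X Y L :: nat and f :: "nat \<Rightarrow> nat"
  assumes valid: "valid_crn S R X Y L"
    and oblivious: "output_oblivious R Y"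
    and computes: "stably_computes R X Y L f"
begin

lemma X_ne_L: "X \<noteq> L" and X_ne_Y: "X \<noteq> Y" and finite_species: "finite S"
  using valid unfolding valid_crn_def by auto

abbreviation inputs :: "nat \<Rightarrow> config" where
  "inputs m \<equiv> (0 :: config)(X := m)"

lemma output_le:
  assumes "reachable R (init_config X L x) C"
  shows "C Y \<le> f x"
proof -
  obtain Z where Z: "reachable R C Z" and "Z Y = f x"
    using computes assms unfolding stably_computes_def by blast
  with reachable_output_mono[OF oblivious Z] show ?thesis
    by simp
qed

lemma stable_output:
  assumes "reachable R (init_config X L x) C" and "stable R Y C"
  shows "C Y = f x"
proof -
  obtain Z where "reachable R C Z" and "Z Y = f x"
    using computes assms(1) unfolding stably_computes_def by blast
  with assms(2) show ?thesis
    unfolding stable_def by simp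
qed

definition stabilize :: "config \<Rightarrow> config" where
  "stabilize C = (SOME Z. reachable R C Z \<and> stable R Y Z)"

lemma stabilize:
  assumes "reachable R (init_config X L x) C"
  shows "reachable R C (stabilize C)" and "stable R Y (stabilize C)"
proof -
  have "\<exists>Z. reachable R C Z \<and> stable R Y Z"
    using computes assms unfolding stably_computes_def by blast
  then have "reachable R C (stabilize C) \<and> stable R Y (stabilize C)"
    unfolding stabilize_def by (rule someI_ex)
  then show "reachable R C (stabilize C)" and "stable R Y (stabilize C)"
    by simp_all
qed

primrec out_chain :: "nat \<Rightarrow> config" where
  "out_chain 0 = stabilize (init_config X L 0)"
| "out_chain (Suc x) = stabilize (out_chain x + inputs 1)"

lemma out_chain_reachable: "reachable R (init_config X L x) (out_chain x)"
proof (induction x)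
  case 0
  show ?case
    using stabilize(1)[OF reachable_refl] by simp
next
  case (Suc x)
  have "reachable R (init_config X L x + inputs 1) (out_chain x + inputs 1)"
    using Suc.IH by (rule reachable_add)
  then have "reachable R (init_config X L (Suc x)) (out_chain x + inputs 1)"
    using init_config_add[OF X_ne_L, of x 1] by simp
  from reachable_trans[OF this stabilize(1)[OF this]] show ?case
    by simp
qed

lemma init_Suc_reachable: "reachable R (init_config X L (Suc x)) (out_chain x + inputs 1)"
proof -
  have "reachable R (init_config X L x + inputs 1) (out_chain x + inputs 1)"
    using out_chain_reachable by (rule reachable_add)
  then show ?thesis
    using init_config_add[OF X_ne_L, of x 1] by simp
qed

lemma out_chain_stable: "stable R Y (out_chain x)"
proof (cases x)
  case 0
  then show ?thesis
    using stabilize(2)[OF reachable_refl] by simp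
next
  case (Suc x')
  then show ?thesis
    using stabilize(2)[OF init_Suc_reachable[of x']] by simp
qed

lemma out_chain_output: "out_chain x Y = f x"
  using out_chain_reachable out_chain_stable by (rule stable_output)

lemma out_chain_support: "s \<notin> S \<Longrightarrow> out_chain x s = 0"
  using valid out_chain_reachable by (rule reachable_support)

lemma out_chain_add_inputs: "reachable R (out_chain x + inputs m) (out_chain (x + m))"
proof (induction m)
  case 0
  have "out_chain x + inputs 0 = out_chain x"
    by (rule ext) simp
  then show ?case by simp
next
  case (Suc m)
  have "out_chain x + inputs (Suc m) = out_chain x + inputs m + inputs 1"
    by (rule ext) simp
  then have "reachable R (out_chain x + inputs (Suc m)) (out_chain (x + m) + inputs 1)"
    using reachable_add[OF Suc.IH, of "inputs 1"] by (simp only:)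
  also have "reachable R \<dots> (out_chain (x + Suc m))"
    using stabilize(1)[OF init_Suc_reachable] by simp
  finally show ?case .
qed

lemma mono_output: "mono f"
  unfolding mono_iff_le_Suc
proof
  fix x
  have "f x = (out_chain x + inputs 1) Y"
    using out_chain_output X_ne_Y by simp
  also have "\<dots> \<le> f (Suc x)"
    using init_Suc_reachable by (rule output_le)
  finally show "f x \<le> f (Suc x)" .
qed


lemma shifted_increment:
  assumes "out_chain i \<le> out_chain j"
  shows "f (i + d) + (f j - f i) \<le> f (j + d)"
proof -
  define E where "E = out_chain j - out_chain i"
  have j: "out_chain j = out_chain i + E"
  proof
    fix s
    show "out_chain j s = (out_chain i + E) s"
      using le_funD[OF assms, of s] unfolding E_def by simp
  qed
  have "reachable R (init_config X L j + inputs d) (out_chain j + inputs d)"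
    using out_chain_reachable by (rule reachable_add)
  then have "reachable R (init_config X L (j + d)) ((out_chain i + inputs d) + E)"
    using init_config_add[OF X_ne_L, of j d] unfolding j by (simp add: ac_simps)
  also have "reachable R \<dots> (out_chain (i + d) + E)"
    using out_chain_add_inputs by (rule reachable_add)
  finally have "(out_chain (i + d) + E) Y \<le> f (j + d)"
    by (rule output_le)
  moreover have "E Y = f j - f i"
    unfolding E_def using out_chain_output by simp
  ultimately show ?thesis
    using out_chain_output by simp
qed

lemma pumped_config_reachable:
  assumes "i \<le> j" and "out_chain i \<le> out_chain j"
  shows "reachable R (init_config X L (i + n * (j - i)))
    (\<lambda>s. out_chain i s + n * (out_chain j s - out_chain i s))"
proof (induction n)
  case 0
  have "(\<lambda>s. out_chain i s + 0 * (out_chain j s - out_chain i s)) = out_chain i"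
    by (rule ext) simp
  then show ?case
    using out_chain_reachable by simp
next
  case (Suc n)
  define E where "E s = n * (out_chain j s - out_chain i s)" for s
  have "reachable R (init_config X L (i + n * (j - i)) + inputs (j - i))
      ((\<lambda>s. out_chain i s + E s) + inputs (j - i))"
    using Suc.IH unfolding E_def by (rule reachable_add)
  moreover have "init_config X L (i + n * (j - i)) + inputs (j - i) = init_config X L (i + Suc n * (j - i))"
    using init_config_add[OF X_ne_L, of "i + n * (j - i)" "j - i"] by (simp add: ac_simps)
  moreover have "(\<lambda>s. out_chain i s + E s) + inputs (j - i) = (out_chain i + inputs (j - i)) + E"
    by (rule ext) simp
  ultimately have "reachable R (init_config X L (i + Suc n * (j - i))) ((out_chain i + inputs (j - i)) + E)"
    by (simp only:)
  also have "reachable R \<dots> (out_chain j + E)"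
    using reachable_add[OF out_chain_add_inputs[of i "j - i"], of E] assms(1) by simp
  finally have "reachable R (init_config X L (i + Suc n * (j - i))) (out_chain j + E)" .
  moreover have "(\<lambda>s. out_chain i s + Suc n * (out_chain j s - out_chain i s)) = out_chain j + E"
  proof
    fix s
    show "out_chain i s + Suc n * (out_chain j s - out_chain i s) = (out_chain j + E) s"
      using le_funD[OF assms(2), of s] unfolding E_def by simp
  qed
  ultimately show ?case
    by (simp only:)
qed

lemma pumped_output:
  assumes "i \<le> j" and "out_chain i \<le> out_chain j"
    and dominated: "\<exists>l. (\<lambda>s. out_chain i s + n * (out_chain j s - out_chain i s)) \<le> out_chain l"
  shows "f (i + n * (j - i)) = f i + n * (f j - f i)"
proof -
  obtain l where "(\<lambda>s. out_chain i s + n * (out_chain j s - out_chain i s)) \<le> out_chain l"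
    using dominated by blast
  with out_chain_stable have "stable R Y (\<lambda>s. out_chain i s + n * (out_chain j s - out_chain i s))"
    by (rule stable_le)
  with pumped_config_reachable[OF assms(1,2)]
  have "out_chain i Y + n * (out_chain j Y - out_chain i Y) = f (i + n * (j - i))"
    by (rule stable_output)
  then show ?thesis
    using out_chain_output by simp
qed

lemma eventually_quasilinear_output: "eventually_quasilinear f"
proof -
  have "\<exists>i j. i < j \<and> out_chain i \<le> out_chain j \<and>
      (\<forall>n. \<exists>l. (\<lambda>s. out_chain i s + n * (out_chain j s - out_chain i s)) \<le> out_chain l)"
    using finite_species out_chain_support by (rule nat_vector_seq_pumping[where V = out_chain])
  then obtain i j where "i < j" and le: "out_chain i \<le> out_chain j"
    and dominated: "\<forall>n. \<exists>l. (\<lambda>s. out_chain i s + n * (out_chain j s - out_chain i s)) \<le> out_chain l"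
    by blast
  show ?thesis
  proof (rule eventually_quasilinear_if_mono_and_bounds[OF mono_output])
    show "0 < j - i"
      using \<open>i < j\<close> by simp
    show "f x + (f j - f i) \<le> f (x + (j - i))" if "i \<le> x" for x
    proof -
      have "x + (j - i) = j + (x - i)"
        using that \<open>i < j\<close> by simp
      then show ?thesis
        using shifted_increment[OF le, of "x - i"] that by simp
    qed
    show "f (i + n * (j - i)) \<le> f i + n * (f j - f i)" for n
      using pumped_output[OF less_imp_le[OF \<open>i < j\<close>] le] dominated by simp
  qed
qed

end

section \<open>A counter CRN for eventually quasilinear functions\<close>

text \<open>Species 0, 1 and 2 are the input, the output and the leader, and species \<open>3 + t\<close> is
  counter state \<open>t\<close>.  Consuming the \<open>(k + 1)\<close>-st input molecule moves the counter from state
  \<open>counter_state k\<close> to \<open>counter_state (k + 1)\<close> and emits \<open>f (k + 1) - f k\<close> output molecules.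
  Counting modulo \<open>P\<close> beyond \<open>N\<close> keeps the states finite, and quasilinearity makes the
  emitted amount depend on the state only.\<close>

locale counter_crn =
  fixes f :: "nat \<Rightarrow> nat" and N P c :: nat
  assumes mono: "mono f" and period_pos: "0 < P"
    and step: "\<And>x. N \<le> x \<Longrightarrow> f (x + P) = f x + c"
begin

definition counter_state :: "nat \<Rightarrow> nat" where
  "counter_state k = (if k < N then k else N + (k - N) mod P)"

definition start :: reaction where
  "start = (\<lambda>s. if s = 2 then 1 else 0, \<lambda>s. if s = 3 then 1 else if s = 1 then f 0 else 0)"

definition advance :: "nat \<Rightarrow> reaction" where
  "advance t = (\<lambda>s. if s = 3 + t then 1 else if s = 0 then 1 else 0,
     \<lambda>s. if s = 3 + counter_state (Suc t) then 1 else if s = 1 then f (Suc t) - f t else 0)"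

definition reactions :: "reaction set" where
  "reactions = insert start (advance ` {..<N + P})"

definition species :: "nat set" where
  "species = {..<3 + (N + P)}"

definition counter_config :: "nat \<Rightarrow> nat \<Rightarrow> config" where
  "counter_config x k =
     (\<lambda>s. if s = 0 then x - k else if s = 1 then f k else if s = 3 + counter_state k then 1 else 0)"

lemma counter_state_less: "counter_state k < N + P"
  unfolding counter_state_def using period_pos by auto

lemma counter_state_Suc: "counter_state (Suc (counter_state k)) = counter_state (Suc k)"
proof (cases "k < N")
  case True
  then show ?thesis
    unfolding counter_state_def by simp
next
  case False
  then have "counter_state (Suc (counter_state k)) = N + Suc ((k - N) mod P) mod P"
    unfolding counter_state_def by simp
  also have "\<dots> = counter_state (Suc k)"
    using False unfolding counter_state_def by (simp add: mod_Suc_eq Suc_diff_le)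
  finally show ?thesis .
qed

lemma increment_counter_state:
  "f (Suc (counter_state k)) - f (counter_state k) = f (Suc k) - f k"
proof (cases "k < N")
  case False
  define m where "m = (k - N) div P"
  have "N \<le> counter_state k"
    using False unfolding counter_state_def by simp
  have k: "counter_state k + m * P = k"
    using False unfolding counter_state_def m_def by simp
  have "f (counter_state k + m * P) = f (counter_state k) + m * c"
    using quasilinear_iterate[of N f P c, OF step \<open>N \<le> counter_state k\<close>] by simp
  moreover have "f (Suc (counter_state k) + m * P) = f (Suc (counter_state k)) + m * c"
    using quasilinear_iterate[of N f P c "Suc (counter_state k)" m, OF step] \<open>N \<le> counter_state k\<close>
    by simp
  ultimately have "f k = f (counter_state k) + m * c" and "f (Suc k) = f (Suc (counter_state k)) + m * c"
    by (simp_all only: k add_Suc)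
  then show ?thesis by simp
qed (simp add: counter_state_def)

lemma reactions_cases:
  assumes "rp \<in> reactions"
  obtains "rp = start" | t where "t < N + P" and "rp = advance t"
  using assms unfolding reactions_def by blast

lemma step_from_init:
  assumes "(init_config 0 2 x, D) \<in> step_rel reactions"
  shows "D = counter_config x 0"
proof -
  obtain rp where rp: "rp \<in> reactions" "applicable rp (init_config 0 2 x)"
    and D: "D = apply_reaction rp (init_config 0 2 x)"
    using assms unfolding step_rel_def by blast
  have "rp = start"
  proof (cases rule: reactions_cases[OF rp(1)])
    case (2 t)
    then have "fst rp (3 + t) \<le> init_config 0 2 x (3 + t)"
      using rp(2) unfolding applicable_def by blast
    then show ?thesis
      unfolding 2 advance_def init_config_def by simp
  qed
  then show ?thesis
    unfolding D start_def counter_config_def apply_reaction_def init_config_def counter_state_def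
    by (auto simp: fun_eq_iff)
qed

lemma step_from_counter_config:
  assumes "(counter_config x k, D) \<in> step_rel reactions"
  shows "k < x" and "D = counter_config x (Suc k)"
proof -
  obtain rp where rp: "rp \<in> reactions" and D: "D = apply_reaction rp (counter_config x k)"
    and available: "\<And>s. fst rp s \<le> counter_config x k s"
    using assms unfolding step_rel_def applicable_def by blast
  obtain t where "t < N + P" and t: "rp = advance t"
  proof (cases rule: reactions_cases[OF rp(1)])
    case 1
    then show ?thesis
      using available[of 2] unfolding start_def counter_config_def by simp
  qed
  have "t = counter_state k"
    using available[of "3 + t"] unfolding t advance_def counter_config_def by (simp split: if_splits)
  then have rp: "rp = advance (counter_state k)"
    using t by simp
  show "k < x"
    using available[of 0] unfolding rp advance_def counter_config_def by simp
  moreover have "f k \<le> f (Suc k)"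
    using mono by (simp add: monoD)
  ultimately show "D = counter_config x (Suc k)"
    unfolding D rp advance_def counter_config_def apply_reaction_def
    by (auto simp: fun_eq_iff counter_state_Suc increment_counter_state)
qed

lemma counter_config_step:
  assumes "k < x"
  shows "(counter_config x k, counter_config x (Suc k)) \<in> step_rel reactions"
proof -
  have reaction: "advance (counter_state k) \<in> reactions"
    unfolding reactions_def using counter_state_less by simp
  have applicable: "applicable (advance (counter_state k)) (counter_config x k)"
    unfolding applicable_def advance_def counter_config_def using assms by auto
  have "f k \<le> f (Suc k)"
    using mono by (simp add: monoD)
  then have "apply_reaction (advance (counter_state k)) (counter_config x k) = counter_config x (Suc k)"
    unfolding advance_def counter_config_def apply_reaction_def
    using assms by (auto simp: fun_eq_iff counter_state_Suc increment_counter_state)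
  then show ?thesis
    using step_relI[OF reaction applicable] by simp
qed

lemma init_step: "(init_config 0 2 x, counter_config x 0) \<in> step_rel reactions"
proof -
  have reaction: "start \<in> reactions" and applicable: "applicable start (init_config 0 2 x)"
    unfolding reactions_def applicable_def start_def init_config_def by auto
  have "apply_reaction start (init_config 0 2 x) = counter_config x 0"
    unfolding start_def counter_config_def apply_reaction_def init_config_def counter_state_def
    by (auto simp: fun_eq_iff)
  then show ?thesis
    using step_relI[OF reaction applicable] by simp
qed

lemma reachable_from_init:
  assumes "reachable reactions (init_config 0 2 x) C"
  shows "C = init_config 0 2 x \<or> (\<exists>k\<le>x. C = counter_config x k)"
  using assms unfolding reachable_def
proof (induction rule: rtrancl_induct)
  case (step D D')
  from step.IH show ?case
  proof
    assume "D = init_config 0 2 x"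
    then have "D' = counter_config x 0"
      using step_from_init step.hyps(2) by simp
    then show ?case
      by blast
  next
    assume "\<exists>k\<le>x. D = counter_config x k"
    then obtain k where "k \<le> x" and "D = counter_config x k"
      by blast
    then have "k < x" and "D' = counter_config x (Suc k)"
      using step_from_counter_config step.hyps(2) by simp_all
    then show ?case
      by (intro disjI2 exI[of _ "Suc k"]) simp
  qed
qed simp

lemma counter_config_reaches_final:
  assumes "k \<le> x"
  shows "reachable reactions (counter_config x k) (counter_config x x)"
  using assms
proof (induction rule: inc_induct)
  case (step k)
  from counter_config_step[OF step.hyps(2)] step.IH show ?case
    unfolding reachable_def by (rule converse_rtrancl_into_rtrancl)
qed simp

lemma counter_config_final_stable: "stable reactions 1 (counter_config x x)"
  unfolding stable_def reachable_def
proof (intro allI impI)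
  fix D
  assume "(counter_config x x, D) \<in> (step_rel reactions)\<^sup>*"
  then have "D = counter_config x x"
    by (induction rule: rtrancl_induct) (use step_from_counter_config in auto)
  then show "D 1 = counter_config x x 1" by simp
qed

lemma obliviously_computable: "obliviously_computable f"
  unfolding obliviously_computable_def
proof (intro exI conjI)
  show "valid_crn species reactions 0 1 2"
    unfolding valid_crn_def species_def reactions_def start_def advance_def
    using period_pos counter_state_less by auto
  show "output_oblivious reactions 1"
    unfolding output_oblivious_def reactions_def start_def advance_def by auto
  show "stably_computes reactions 0 1 2 f"
    unfolding stably_computes_def
  proof (intro allI impI)
    fix x C
    assume "reachable reactions (init_config 0 2 x) C"
    then have "\<exists>k\<le>x. reachable reactions C (counter_config x k)"
    proof (rule reachable_from_init[THEN disjE])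
      assume "C = init_config 0 2 x"
      then have "reachable reactions C (counter_config x 0)"
        using init_step[of x] unfolding reachable_def by (simp add: r_into_rtrancl)
      then show ?thesis
        by blast
    qed auto
    then obtain k where "k \<le> x" and "reachable reactions C (counter_config x k)"
      by blast
    then have "reachable reactions C (counter_config x x)"
      using counter_config_reaches_final reachable_trans by blast
    moreover have "counter_config x x 1 = f x"
      unfolding counter_config_def by simp
    ultimately show "\<exists>Out. reachable reactions C Out \<and> stable reactions 1 Out \<and> Out 1 = f x"
      using counter_config_final_stable by blast
  qed
qed

end

lemma obliviously_computable_iff_mono_eventually_quasilinear:
  "obliviously_computable f \<longleftrightarrow> mono f \<and> eventually_quasilinear f"
proof
  assume "obliviously_computable f"
  then obtain S R X Y L where "oblivious_crn S R X Y L f"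
    unfolding obliviously_computable_def oblivious_crn_def by blast
  then show "mono f \<and> eventually_quasilinear f"
    using oblivious_crn.mono_output oblivious_crn.eventually_quasilinear_output by blast
next
  assume "mono f \<and> eventually_quasilinear f"
  then obtain N P c where "counter_crn f N P c"
    unfolding eventually_quasilinear_def counter_crn_def by blast
  then show "obliviously_computable f"
    by (rule counter_crn.obliviously_computable)
qed

theorem theorem8:
  fixes f :: "nat \<Rightarrow> nat"
  shows "obliviously_computable f \<longleftrightarrow> semilinear_fun f \<and> mono f"
  using obliviously_computable_iff_mono_eventually_quasilinear[of f]
    mono_imp_semilinear_fun_iff_eventually_quasilinear[of f]
  by blast

end
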